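(* Assume $b\ne0$ and $H(x)\to\infty$ as $x\to\infty$, where $H(x)=\frac1{|b|}\int_{e^{-x}}^1\frac{\Phi(u)}{u}\,\mathrm{d}u$. Let $\bar\nu(u)=\nu([u,\infty))$ for $u\ge0$. Then $$H(x)\sim\frac1{|b|}\int_1^{e^x}\frac{\bar\nu(u)}{u}\,\mathrm{d}u\quad\text{as }x\to\infty.$$ Moreover, $H'(x)=\Phi(e^{-x})/|b|$ for all $x\ge0$, and if $u\mapsto\bar\nu(u)$ is slowly varying at $\infty$, then $H'(x)\sim\bar\nu(e^x)/|b|$ as $x\to\infty$.
   Context: Let $b\in\mathbb R$, $\beta\ge 0$, and let $\nu$ be a $\sigma$-finite measure on $(0,\infty)$ with $\int_0^\infty(1\wedge z)\nu(\mathrm{d}z)<\infty$; $\Phi(q)=\beta q+\int_0^\infty(1-e^{-qu})\nu(\mathrm{d}u)$, $q\ge0$, with $\Phi(q)>0$ for $q>0$. Here $b=\Psi'(0+)$ is the drift parameter of a branching mechanism $\Psi(q)=bq+\frac12\sigma^2q^2+\int_0^\infty(e^{-qu}-1+qu)\pi(\mathrm{d}u)$ (with $\sigma\ge0$, $\int_0^\infty(z\wedge z^2)\pi(\mathrm{d}z)<\infty$). A function $R$ is slowly varying at $\infty$ if $R(\lambda x)/R(x)\to1$ as $x\to\infty$ for every $\lambda>0$. *)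

theory Defs
  imports "HOL-Analysis.Analysis" "HOL-Library.Landau_Symbols"
begin

definition Phi :: "real \<Rightarrow> real measure \<Rightarrow> real \<Rightarrow> real" where
  "Phi \<beta> \<nu> q = \<beta> * q + (\<integral>u. (1 - exp (- q * u)) \<partial>\<nu>)"

definition nubar :: "real measure \<Rightarrow> real \<Rightarrow> real" where
  "nubar \<nu> u = measure \<nu> {u..}"

definition Hfun :: "real \<Rightarrow> real \<Rightarrow> real measure \<Rightarrow> real \<Rightarrow> real" where
  "Hfun b \<beta> \<nu> x = (1 / \<bar>b\<bar>) * (LBINT u=exp (- x)..1. Phi \<beta> \<nu> u / u)"

definition slowly_varying :: "(real \<Rightarrow> real) \<Rightarrow> bool" where
  "slowly_varying R \<longleftrightarrow> (\<forall>c>0. ((\<lambda>x. R (c * x) / R x) \<longlongrightarrow> 1) at_top)"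

end

theory Submission
  imports Defs
begin

text \<open>
  Substituting \<open>u = exp (- s)\<close> and \<open>u = exp s\<close> turns \<open>H x\<close> and the comparison
  function into \<open>1/\<bar>b\<bar>\<close> times the integrals over \<open>[0, x]\<close> of \<open>\<Phi>(exp (- s))\<close>
  and of \<open>nubar (exp s)\<close>. Since \<open>1 - exp (- w)\<close> differs from the step function
  \<open>[w \<ge> 1]\<close> by at most \<open>6 (exp (- w / e) - exp (- w))\<close>, the two integrands differ by at
  most \<open>6 (\<Phi>(exp (- s)) - \<Phi>(exp (- s - 1)))\<close>, which telescopes; so \<open>H\<close> and the
  comparison function differ by a bounded amount, and \<open>H x \<rightarrow> \<infinity>\<close> gives the
  equivalence. The derivative is the fundamental theorem of calculus, \<open>\<Phi>\<close> being concave
  and hence continuous on \<open>(0, \<infinity>)\<close>.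

  For a slowly varying tail, \<open>\<Phi>(1/y)\<close> is bounded below by \<open>(1 - exp (- s)) nubar (s y)\<close>
  and above by \<open>nubar (\<epsilon> y) + (\<beta> + \<integral> min z (\<epsilon> y) \<nu>(dz)) / y\<close>. Iterating
  \<open>nubar (y/2) \<le> 3/2 nubar y\<close> along dyadic scales shows that the truncated mean
  \<open>\<integral> min z t \<nu>(dz)\<close> is at most \<open>C + 3 t nubar t\<close> and that \<open>t nubar t \<rightarrow> \<infinity>\<close>,
  so \<open>\<Phi>(1/y) / nubar y\<close> is eventually above every \<open>a < 1 - exp (- s)\<close> and below every
  \<open>a > 1 + 3 \<epsilon>\<close>.
\<close>

lemma abs_one_minus_exp_le:
  fixes q z :: real
  assumes "q \<ge> 0" "z > 0"
  shows "\<bar>1 - exp (- q * z)\<bar> \<le> max 1 q * min 1 z"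
proof (cases "z \<le> 1")
  case True
  have "1 - exp (- q * z) \<le> q * z" using exp_ge_add_one_self[of "- q * z"] by simp
  also have "\<dots> \<le> max 1 q * z" using assms by (intro mult_right_mono) auto
  finally show ?thesis using assms True by simp
next
  case False
  have "1 - exp (- q * z) \<le> max 1 q" by (simp add: le_max_iff_disj)
  then show ?thesis using assms False by simp
qed

lemma abs_one_minus_exp_sub_step_le:
  fixes w :: real
  assumes "w > 0"
  shows "\<bar>(1 - exp (- w)) - (if 1 \<le> w then 1 else 0)\<bar> \<le> 6 * (exp (- w * exp (- 1)) - exp (- w))"
proof -
  have e_bounds: "1/3 \<le> exp (- 1 :: real)" "exp (- 1 :: real) \<le> 1/2"
    using exp_le exp_ge_add_one_self[of "1::real"] by (simp_all add: exp_minus field_simps)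
  have "1 + w / 2 \<le> 1 + w * (1 - exp (- 1))"
    using mult_left_mono[of "1/2" "1 - exp (- 1)" w] e_bounds assms by simp
  also have "\<dots> \<le> exp (w * (1 - exp (- 1)))" by (rule exp_ge_add_one_self)
  finally have "exp (- w) * (1 + w / 2) \<le> exp (- w) * exp (w * (1 - exp (- 1)))"
    by simp
  also have "\<dots> = exp (- w * exp (- 1))"
    by (simp add: algebra_simps flip: exp_add)
  finally have gap: "3 * w * exp (- w) \<le> 6 * (exp (- w * exp (- 1)) - exp (- w))"
    by (simp add: algebra_simps)
  show ?thesis
  proof (cases "1 \<le> w")
    case True
    then have "exp (- w) \<le> 3 * w * exp (- w)" by simp
    moreover have "\<bar>(1 - exp (- w)) - (if 1 \<le> w then 1 else 0)\<bar> = exp (- w)" using True by simp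
    ultimately show ?thesis using gap by linarith
  next
    case False
    then have "exp (- 1) \<le> exp (- w)" by simp
    then have "1/3 \<le> exp (- w)" using e_bounds by linarith
    then have "w \<le> 3 * w * exp (- w)" using assms by (simp add: field_simps)
    moreover have "1 - exp (- w) \<le> w" "0 \<le> 1 - exp (- w)"
      using exp_ge_add_one_self[of "- w"] assms by simp_all
    ultimately show ?thesis using False gap by simp
  qed
qed

lemma set_integral_telescope_le:
  fixes G :: "real \<Rightarrow> real"
  assumes cont: "\<And>s. isCont G s" and nonneg: "\<And>s. G s \<ge> 0" and "x \<ge> 0"
  shows "(LINT s:{0..x}|lborel. G s - G (s + 1)) \<le> (LINT s:{0..1}|lborel. G s)"
proof -
  have integrable: "interval_lebesgue_integrable lborel (ereal a) (ereal b) G" for a b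
    by (intro interval_integrable_isCont cont)
  have split: "(LBINT s=ereal a..ereal b. G s) + (LBINT s=ereal b..ereal c. G s) = (LBINT s=ereal a..ereal c. G s)"
    for a b c
    using integrable[of "min a (min b c)" "max a (max b c)"] by (intro interval_integral_sum) simp
  have shift: "(LBINT s=ereal 0..ereal x. G (s + 1)) = (LBINT s=ereal 1..ereal (x + 1). G s)"
  proof -
    have "((\<lambda>s. s + 1) has_real_derivative 1) (at s within {0..x})" for s
      by (auto intro!: derivative_eq_intros)
    then show ?thesis
      using interval_integral_substitution_finite[OF \<open>x \<ge> 0\<close>, of "\<lambda>s. s + 1" "\<lambda>_. 1" G]
      by (simp add: continuous_at_imp_continuous_on cont)
  qed
  have "(LBINT s=ereal x..ereal (x + 1). G s) \<ge> 0"
    using nonneg unfolding interval_integral_Icc[OF le_add_same_cancel1[THEN iffD2, OF zero_le_one]]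
    by (simp add: set_lebesgue_integral_def)
  moreover have "(LINT s:{0..x}|lborel. G s - G (s + 1))
      = (LBINT s=ereal 0..ereal x. G s) - (LBINT s=ereal 0..ereal x. G (s + 1))"
  proof -
    have "isCont (\<lambda>s. G (s + 1)) s" for s
      using continuous_at_compose[of s "\<lambda>s. s + 1" G] cont by (simp add: o_def)
    then have "interval_lebesgue_integrable lborel (ereal 0) (ereal x) (\<lambda>s. G (s + 1))"
      by (intro interval_integrable_isCont)
    then show ?thesis
      using \<open>x \<ge> 0\<close> integrable interval_lebesgue_integral_diff(2)
      by (simp add: interval_integral_Icc[symmetric])
  qed
  ultimately show ?thesis
    using split[of 0 1 x] split[of 1 x "x + 1"] \<open>x \<ge> 0\<close>
    by (simp add: shift interval_integral_Icc)
qed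

lemma asymp_equiv_if_bounded_diff:
  fixes f g :: "'a \<Rightarrow> real"
  assumes f: "filterlim f at_top F" and bounded: "eventually (\<lambda>x. \<bar>f x - g x\<bar> \<le> B) F"
  shows "f \<sim>[F] g"
proof -
  have "((\<lambda>x. (f x - g x) / f x) \<longlongrightarrow> 0) F"
  proof (rule tendsto_0_le[OF tendsto_inverse_0_at_top[OF f], where K = B])
    show "eventually (\<lambda>x. norm ((f x - g x) / f x) \<le> norm (inverse (f x)) * B) F"
      using bounded
    proof eventually_elim
      case (elim x)
      then have "inverse \<bar>f x\<bar> * \<bar>f x - g x\<bar> \<le> inverse \<bar>f x\<bar> * B"
        by (intro mult_left_mono) auto
      then show ?case by (simp add: abs_mult divide_inverse mult.commute)
    qed
  qed
  then have "((\<lambda>x. 1 - (f x - g x) / f x) \<longlongrightarrow> 1) F"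
    using tendsto_diff[OF tendsto_const] by fastforce
  moreover have "eventually (\<lambda>x. 1 - (f x - g x) / f x = g x / f x) F"
    using filterlim_at_top_dense[THEN iffD1, OF f, rule_format, of 0]
    by eventually_elim (simp add: field_simps)
  ultimately have "g \<sim>[F] f"
    by (intro asymp_equivI') (simp add: tendsto_cong)
  then show ?thesis by (rule asymp_equiv_symI)
qed

lemma slowly_varyingD: "slowly_varying R \<Longrightarrow> c > 0 \<Longrightarrow> ((\<lambda>x. R (c * x) / R x) \<longlongrightarrow> 1) at_top"
  by (simp add: slowly_varying_def)

lemma doubling_induct [consumes 2, case_names base step]:
  fixes X y :: real
  assumes "X > 0" "X \<le> y"
    and base: "\<And>y. X \<le> y \<Longrightarrow> y < 2 * X \<Longrightarrow> P y"
    and step: "\<And>y. 2 * X \<le> y \<Longrightarrow> P (y / 2) \<Longrightarrow> P y"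
  shows "P y"
proof -
  obtain n where "y / X < 2 ^ n" using real_arch_pow[of 2 "y / X"] by auto
  then have "y < 2 ^ n * X" using \<open>X > 0\<close> by (simp add: field_simps)
  with \<open>X \<le> y\<close> show ?thesis
  proof (induction n arbitrary: y)
    case 0
    then show ?case by simp
  next
    case (Suc n)
    show ?case
    proof (cases "y < 2 * X")
      case True
      then show ?thesis using base Suc.prems by blast
    next
      case False
      have "2 * X \<le> y" using False by simp
      moreover have "P (y / 2)" by (rule Suc.IH) (use False Suc.prems in auto)
      ultimately show ?thesis by (rule step)
    qed
  qed
qed

lemma filterlim_at_top_doubling:
  fixes g :: "real \<Rightarrow> real"
  assumes "X > 0" "r > 1" "c > 0"
    and lower: "\<And>y. X \<le> y \<Longrightarrow> c \<le> g y"
    and growth: "\<And>y. 2 * X \<le> y \<Longrightarrow> r * g (y / 2) \<le> g y"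
  shows "filterlim g at_top at_top"
proof -
  have geometric: "r ^ n * c \<le> g y" if "2 ^ n * X \<le> y" for n y
    using that
  proof (induction n arbitrary: y)
    case 0
    then show ?case using lower by simp
  next
    case (Suc n)
    have "X \<le> 2 ^ n * X" using \<open>X > 0\<close> by simp
    then have "2 * X \<le> y" "2 ^ n * X \<le> y / 2" using Suc.prems by simp_all
    then have "r * (r ^ n * c) \<le> r * g (y / 2)" "r * g (y / 2) \<le> g y"
      using Suc.IH \<open>r > 1\<close> growth by simp_all
    then show ?case by simp
  qed
  show ?thesis
  proof (subst filterlim_at_top, intro allI)
    fix Z :: real
    obtain n where "Z / c < r ^ n" using real_arch_pow[OF \<open>r > 1\<close>] by blast
    then have "Z \<le> r ^ n * c" using \<open>c > 0\<close> by (simp add: field_simps)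
    moreover have "eventually (\<lambda>y. r ^ n * c \<le> g y) at_top"
      using eventually_ge_at_top[of "2 ^ n * X"] by (rule eventually_mono) (rule geometric)
    ultimately show "eventually (\<lambda>y. Z \<le> g y) at_top"
      by (auto elim!: eventually_mono)
  qed
qed

section \<open>The Laplace exponent of a subordinator\<close>

locale subordinator_exponent =
  fixes \<beta> :: real and \<nu> :: "real measure"
  assumes drift_nonneg: "\<beta> \<ge> 0"
    and sets_nu[measurable_cong]: "sets \<nu> = sets borel"
    and nu_nonpos: "emeasure \<nu> {..0} = 0"
    and nn_integral_min_1_finite: "(\<integral>\<^sup>+ z. ennreal (min 1 z) \<partial>\<nu>) < \<infinity>"
begin

lemma AE_pos: "AE z in \<nu>. z > 0"
proof (rule AE_I')
  show "{..0} \<in> null_sets \<nu>" using nu_nonpos sets_nu by (auto simp: null_sets_def)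
qed auto

lemma integrable_min_1: "integrable \<nu> (\<lambda>z. min 1 z)"
  using nn_integral_min_1_finite AE_pos
  by (intro integrableI_nonneg) (auto elim!: eventually_mono)

lemma integrable_if_le_min_1:
  assumes "f \<in> borel_measurable borel" "\<And>z. z > 0 \<Longrightarrow> \<bar>f z\<bar> \<le> C * min 1 z"
  shows "integrable \<nu> f"
proof (rule Bochner_Integration.integrable_bound[OF integrable_mult_right[OF integrable_min_1]])
  show "f \<in> borel_measurable \<nu>" using assms(1) by measurable
  show "AE z in \<nu>. norm (f z) \<le> norm (C * min 1 z)"
    using AE_pos by eventually_elim (use assms(2) in force)
qed

definition jump_exponent :: "real \<Rightarrow> real" where
  "jump_exponent q = (\<integral>u. 1 - exp (- q * u) \<partial>\<nu>)"

lemma Phi_eq: "Phi \<beta> \<nu> q = \<beta> * q + jump_exponent q"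
  by (simp add: Phi_def jump_exponent_def)

lemma integrable_one_minus_exp: "q \<ge> 0 \<Longrightarrow> integrable \<nu> (\<lambda>u. 1 - exp (- q * u))"
  using abs_one_minus_exp_le[of q] by (intro integrable_if_le_min_1[where C = "max 1 q"]) auto

lemma jump_exponent_nonneg: "q \<ge> 0 \<Longrightarrow> jump_exponent q \<ge> 0"
  unfolding jump_exponent_def
  by (intro integral_nonneg_AE) (use AE_pos in \<open>auto elim!: eventually_mono\<close>)

lemma Phi_nonneg: "q \<ge> 0 \<Longrightarrow> Phi \<beta> \<nu> q \<ge> 0"
  using drift_nonneg jump_exponent_nonneg by (simp add: Phi_eq)

lemma concave_on_jump_exponent: "concave_on {0..} jump_exponent"
proof -
  have "u * jump_exponent p + v * jump_exponent q \<le> jump_exponent (u * p + v * q)"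
    if "p \<ge> 0" "q \<ge> 0" "u \<ge> 0" "v \<ge> 0" "u + v = 1" for p q u v :: real
  proof -
    have pointwise: "u * (1 - exp (- p * z)) + v * (1 - exp (- q * z)) \<le> 1 - exp (- (u * p + v * q) * z)"
      for z :: real
    proof -
      have u: "u = 1 - v" using that by simp
      have "exp ((1 - v) * (- p * z) + v * (- q * z)) \<le> (1 - v) * exp (- p * z) + v * exp (- q * z)"
        using convex_onD[OF exp_convex, of v "- p * z" "- q * z"] that by simp
      then show ?thesis unfolding u by (simp add: algebra_simps)
    qed
    have ip: "integrable \<nu> (\<lambda>z. 1 - exp (- p * z))" and iq: "integrable \<nu> (\<lambda>z. 1 - exp (- q * z))"
      using integrable_one_minus_exp that(1,2) by blast+
    have "u * jump_exponent p + v * jump_exponent q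
        = (\<integral>z. u * (1 - exp (- p * z)) + v * (1 - exp (- q * z)) \<partial>\<nu>)"
      using ip iq unfolding jump_exponent_def by simp
    also have "\<dots> \<le> jump_exponent (u * p + v * q)"
      unfolding jump_exponent_def using that
      by (intro integral_mono pointwise Bochner_Integration.integrable_add integrable_mult_right ip iq
          integrable_one_minus_exp) simp
    finally show ?thesis .
  qed
  then show ?thesis by (auto simp: concave_on_iff)
qed

lemma isCont_jump_exponent:
  assumes "q > 0" shows "isCont jump_exponent q"
proof -
  have "convex_on {0<..} (\<lambda>q. - jump_exponent q)"
    using concave_on_jump_exponent unfolding concave_on_def
    by (rule convex_on_subset) auto
  then have "continuous_on {0<..} jump_exponent"
    using convex_on_continuous[of "{0<..}" "\<lambda>q. - jump_exponent q"] continuous_on_minus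
    by fastforce
  then show ?thesis using assms by (simp add: continuous_on_eq_continuous_at)
qed

lemma isCont_Phi: "q > 0 \<Longrightarrow> isCont (Phi \<beta> \<nu>) q"
  unfolding Phi_eq[abs_def] by (intro continuous_intros isCont_jump_exponent)

lemma isCont_Phi_exp_minus: "isCont (\<lambda>s. Phi \<beta> \<nu> (exp (- s))) s"
  using continuous_at_compose[of s "\<lambda>s. exp (- s)" "Phi \<beta> \<nu>"] isCont_Phi
  by (simp add: o_def continuous_intros)

lemma integrable_indicator_atLeast: "y > 0 \<Longrightarrow> integrable \<nu> (indicator {y..} :: real \<Rightarrow> real)"
  by (rule integrable_if_le_min_1[where C = "1 / min 1 y"]) (auto simp: indicator_def field_simps)

lemma nubar_eq_integral: "y > 0 \<Longrightarrow> nubar \<nu> y = (\<integral>z. indicator {y..} z \<partial>\<nu>)"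
  using integrable_indicator_atLeast[of y] by (simp add: nubar_def integrable_indicator_iff)

lemma nubar_nonneg: "nubar \<nu> y \<ge> 0"
  by (simp add: nubar_def)

lemma nubar_antimono: "0 < x \<Longrightarrow> x \<le> y \<Longrightarrow> nubar \<nu> y \<le> nubar \<nu> x"
  using integrable_indicator_atLeast[of x] unfolding nubar_def
  by (intro measure_mono_fmeasurable) (auto simp: fmeasurable_def integrable_indicator_iff)

text \<open>\<open>nubar\<close> is antitone only on \<open>(0, \<infinity>)\<close>: for \<open>u \<le> 0\<close> the set \<open>{u..}\<close> may have
  infinite measure, and then \<open>measure\<close> returns 0.\<close>

lemma borel_measurable_nubar_comp:
  fixes g :: "real \<Rightarrow> real"
  assumes "mono g" "\<And>s. g s > 0"
  shows "(\<lambda>s. nubar \<nu> (g s)) \<in> borel_measurable borel"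
proof -
  have "mono (\<lambda>s. - nubar \<nu> (g s))"
    using assms by (intro monoI) (simp add: nubar_antimono monoD)
  from borel_measurable_uminus[OF borel_measurable_mono[OF this]] show ?thesis by simp
qed

lemma has_real_derivative_LBINT_Phi_div:
  assumes "y > 0"
  shows "((\<lambda>y. LBINT u=1..y. Phi \<beta> \<nu> u / u) has_real_derivative Phi \<beta> \<nu> y / y) (at y)"
proof -
  define a c where "a = min (y/2) (1/2)" and "c = max 2 (2*y)"
  have ac: "0 < a" "a < y" "a \<le> 1" "y < c" "1 \<le> c" using assms by (auto simp: a_def c_def)
  have "continuous_on {a..c} (\<lambda>u. Phi \<beta> \<nu> u / u)"
    using ac by (intro continuous_at_imp_continuous_on ballI continuous_intros isCont_Phi) auto
  from interval_integral_FTC2[OF _ _ this, of 1 y] ac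
  have "((\<lambda>y. LBINT u=1..y. Phi \<beta> \<nu> u / u) has_vector_derivative Phi \<beta> \<nu> y / y) (at y within {a..c})"
    by (simp add: one_ereal_def)
  then show ?thesis
    using ac by (simp add: has_real_derivative_iff_has_vector_derivative at_within_Icc_at)
qed

lemma has_real_derivative_Hfun:
  "(Hfun b \<beta> \<nu> has_real_derivative Phi \<beta> \<nu> (exp (- x)) / \<bar>b\<bar>) (at x)"
proof -
  let ?F = "\<lambda>x. LBINT u=1..exp (- x). Phi \<beta> \<nu> u / u"
  have H: "Hfun b \<beta> \<nu> = (\<lambda>x. - ?F x / \<bar>b\<bar>)"
    unfolding Hfun_def by (subst interval_integral_endpoints_reverse) (simp add: one_ereal_def)
  have "(?F has_real_derivative Phi \<beta> \<nu> (exp (- x)) / exp (- x) * - exp (- x)) (at x)"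
    by (rule DERIV_chain2[OF has_real_derivative_LBINT_Phi_div]) (auto intro!: derivative_eq_intros)
  then have "((\<lambda>x. - ?F x / \<bar>b\<bar>) has_real_derivative
      - (Phi \<beta> \<nu> (exp (- x)) / exp (- x) * - exp (- x)) / \<bar>b\<bar>) (at x)"
    by (intro DERIV_cdivide DERIV_minus)
  then show ?thesis unfolding H by simp
qed

lemma LBINT_Phi_div_eq_LINT:
  assumes "x \<ge> 0"
  shows "(LBINT u=exp (- x)..1. Phi \<beta> \<nu> u / u) = (LINT s:{0..x}|lborel. Phi \<beta> \<nu> (exp (- s)))"
proof -
  have "(LBINT s=ereal 0..ereal x. (- exp (- s)) *\<^sub>R (- Phi \<beta> \<nu> (exp (- s)) / exp (- s)))
      = (LBINT u=ereal (exp (- 0))..ereal (exp (- x)). - Phi \<beta> \<nu> u / u)"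
    by (rule interval_integral_substitution_finite[OF assms])
      (auto intro!: derivative_eq_intros continuous_intros continuous_at_imp_continuous_on isCont_Phi)
  then show ?thesis
    using assms
    by (subst interval_integral_endpoints_reverse)
      (simp add: interval_lebesgue_integral_uminus interval_integral_Icc one_ereal_def)
qed

lemma LBINT_nubar_div_eq_LINT:
  assumes "x \<ge> 0"
  shows "(LBINT u=1..exp x. nubar \<nu> u / u) = (LINT s:{0..x}|lborel. nubar \<nu> (exp s))"
    and "set_integrable lborel {0..x} (\<lambda>s. nubar \<nu> (exp s))"
proof -
  have "set_integrable lborel {exp 0..exp x} (\<lambda>u. nubar \<nu> u / u)"
  proof (rule set_integrable_bound[where f = "\<lambda>_. nubar \<nu> 1"])
    show "set_integrable lborel {exp 0..exp x} (\<lambda>_. nubar \<nu> 1)"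
      by (intro borel_integrable_atLeastAtMost' continuous_on_const)
    have "(\<lambda>u. nubar \<nu> (max 1 u)) \<in> borel_measurable borel"
      by (rule borel_measurable_nubar_comp) (auto simp: mono_def)
    then have "set_borel_measurable lborel {exp 0..exp x} (\<lambda>u. nubar \<nu> (max 1 u) / u)"
      unfolding set_borel_measurable_def by measurable
    then show "set_borel_measurable lborel {exp 0..exp x} (\<lambda>u. nubar \<nu> u / u)"
      unfolding set_borel_measurable_def
      by (rule measurable_cong[THEN iffD1, rotated]) (auto simp: indicator_def)
    have "nubar \<nu> u / u \<le> nubar \<nu> 1" if "1 \<le> u" for u
    proof -
      have "nubar \<nu> u / u \<le> nubar \<nu> u / 1"
        using that nubar_nonneg[of u] by (intro divide_left_mono) auto
      then show ?thesis using that nubar_antimono[of 1 u] by simp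
    qed
    then show "AE u in lborel. u \<in> {exp 0..exp x} \<longrightarrow> norm (nubar \<nu> u / u) \<le> norm (nubar \<nu> 1)"
      by (auto simp: nubar_nonneg)
  qed
  note substitution = interval_integral_substitution[where g = exp and g' = exp,
      OF this DERIV_exp continuous_on_exp[OF continuous_on_id] _ assms]
  show "set_integrable lborel {0..x} (\<lambda>s. nubar \<nu> (exp s))"
    using substitution(1) by (simp del: exp_zero)
  show "(LBINT u=1..exp x. nubar \<nu> u / u) = (LINT s:{0..x}|lborel. nubar \<nu> (exp s))"
    using substitution(2) assms by (simp add: interval_integral_Icc one_ereal_def)
qed

lemma abs_jump_exponent_sub_nubar_le:
  assumes "q > 0"
  shows "\<bar>jump_exponent q - nubar \<nu> (1 / q)\<bar> \<le> 6 * (jump_exponent q - jump_exponent (q * exp (- 1)))"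
proof -
  define q' where "q' = q * exp (- 1)"
  have iq: "integrable \<nu> (\<lambda>z. 1 - exp (- q * z))" and iq': "integrable \<nu> (\<lambda>z. 1 - exp (- q' * z))"
    by (rule integrable_one_minus_exp, use assms in \<open>simp add: q'_def\<close>)+
  have ind: "integrable \<nu> (indicator {1 / q..} :: real \<Rightarrow> real)"
    using assms by (simp add: integrable_indicator_atLeast)
  have pointwise: "\<bar>(1 - exp (- q * z)) - indicator {1 / q..} z\<bar> \<le> 6 * ((1 - exp (- q * z)) - (1 - exp (- q' * z)))"
    if "z > 0" for z
  proof -
    have "indicator {1 / q..} z = (if 1 \<le> q * z then 1 else (0::real))"
      using assms by (simp add: indicator_def field_simps)
    then show ?thesis
      using abs_one_minus_exp_sub_step_le[of "q * z"] assms that by (simp add: q'_def algebra_simps)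
  qed
  have "\<bar>jump_exponent q - nubar \<nu> (1 / q)\<bar> = \<bar>\<integral>z. (1 - exp (- q * z)) - indicator {1 / q..} z \<partial>\<nu>\<bar>"
    unfolding jump_exponent_def nubar_eq_integral[OF divide_pos_pos[OF zero_less_one assms]]
    using iq ind by simp
  also have "\<dots> \<le> (\<integral>z. \<bar>(1 - exp (- q * z)) - indicator {1 / q..} z\<bar> \<partial>\<nu>)"
    by (rule integral_abs_bound[simplified real_norm_def])
  also have "\<dots> \<le> (\<integral>z. 6 * ((1 - exp (- q * z)) - (1 - exp (- q' * z))) \<partial>\<nu>)"
  proof (rule integral_mono_AE)
    show "integrable \<nu> (\<lambda>z. \<bar>(1 - exp (- q * z)) - indicator {1 / q..} z\<bar>)"
      by (intro integrable_abs Bochner_Integration.integrable_diff iq ind)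
    show "integrable \<nu> (\<lambda>z. 6 * ((1 - exp (- q * z)) - (1 - exp (- q' * z))))"
      by (intro integrable_mult_right Bochner_Integration.integrable_diff iq iq')
    show "AE z in \<nu>. \<bar>(1 - exp (- q * z)) - indicator {1 / q..} z\<bar>
        \<le> 6 * ((1 - exp (- q * z)) - (1 - exp (- q' * z)))"
      using AE_pos by eventually_elim (rule pointwise)
  qed
  also have "\<dots> = 6 * (jump_exponent q - jump_exponent q')"
    unfolding jump_exponent_def
    by (simp only: integral_mult_right_zero Bochner_Integration.integral_diff[OF iq iq'])
  finally show ?thesis unfolding q'_def .
qed

lemma abs_Phi_exp_sub_nubar_le:
  "\<bar>Phi \<beta> \<nu> (exp (- s)) - nubar \<nu> (exp s)\<bar> \<le> 6 * (Phi \<beta> \<nu> (exp (- s)) - Phi \<beta> \<nu> (exp (- (s + 1))))"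
proof -
  have shift: "exp (- (s + 1)) = exp (- s) * exp (- 1)" by (simp flip: exp_add)
  have inverse: "1 / exp (- s) = exp s" by (simp add: exp_minus divide_inverse)
  have "\<bar>jump_exponent (exp (- s)) - nubar \<nu> (exp s)\<bar>
      \<le> 6 * (jump_exponent (exp (- s)) - jump_exponent (exp (- (s + 1))))"
    using abs_jump_exponent_sub_nubar_le[OF exp_gt_zero, of "- s"] unfolding inverse shift .
  moreover have "\<beta> * exp (- s) \<le> 6 * (\<beta> * exp (- s) - \<beta> * exp (- (s + 1)))"
    using drift_nonneg exp_ge_add_one_self[of 1] unfolding shift
    by (simp add: exp_minus field_simps mult_left_mono)
  moreover have "0 \<le> \<beta> * exp (- s)" using drift_nonneg by simp
  ultimately show ?thesis
    unfolding Phi_eq abs_le_iff by (simp add: algebra_simps)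
qed

lemma abs_LINT_Phi_exp_sub_nubar_le:
  assumes "x \<ge> 0"
  shows "\<bar>LINT s:{0..x}|lborel. Phi \<beta> \<nu> (exp (- s)) - nubar \<nu> (exp s)\<bar>
    \<le> 6 * (LINT s:{0..1}|lborel. Phi \<beta> \<nu> (exp (- s)))"
proof -
  let ?G = "\<lambda>s. Phi \<beta> \<nu> (exp (- s))"
  let ?d = "\<lambda>s. ?G s - nubar \<nu> (exp s)"
  have int_d: "set_integrable lborel {0..x} ?d"
    by (intro set_integral_diff(1) borel_integrable_atLeastAtMost' continuous_at_imp_continuous_on
        ballI isCont_Phi_exp_minus LBINT_nubar_div_eq_LINT(2)[OF assms])
  have "isCont (\<lambda>s. ?G s - ?G (s + 1)) s" for s
    using continuous_at_compose[of s "\<lambda>s. s + 1" ?G] isCont_Phi_exp_minus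
    by (simp add: o_def continuous_intros)
  then have int_telescope: "set_integrable lborel {0..x} (\<lambda>s. 6 * (?G s - ?G (s + 1)))"
    by (intro set_integrable_mult_right borel_integrable_atLeastAtMost' continuous_at_imp_continuous_on ballI)
  have "\<bar>LINT s:{0..x}|lborel. ?d s\<bar> \<le> (LINT s:{0..x}|lborel. \<bar>?d s\<bar>)"
    using set_integral_norm_bound[OF int_d] by simp
  also have "\<dots> \<le> (LINT s:{0..x}|lborel. 6 * (?G s - ?G (s + 1)))"
    using set_integrable_abs[OF int_d] int_telescope abs_Phi_exp_sub_nubar_le by (rule set_integral_mono)
  also have "\<dots> = 6 * (LINT s:{0..x}|lborel. ?G s - ?G (s + 1))"
    by (rule set_integral_mult_right)
  also have "\<dots> \<le> 6 * (LINT s:{0..1}|lborel. ?G s)"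
    using set_integral_telescope_le[OF isCont_Phi_exp_minus Phi_nonneg assms] by simp
  finally show ?thesis .
qed

lemma abs_Hfun_sub_LBINT_nubar_le:
  assumes "x \<ge> 0"
  shows "\<bar>Hfun b \<beta> \<nu> x - (1 / \<bar>b\<bar>) * (LBINT u=1..exp x. nubar \<nu> u / u)\<bar>
    \<le> (1 / \<bar>b\<bar>) * (6 * (LINT s:{0..1}|lborel. Phi \<beta> \<nu> (exp (- s))))"
proof -
  have int_G: "set_integrable lborel {0..x} (\<lambda>s. Phi \<beta> \<nu> (exp (- s)))"
    by (intro borel_integrable_atLeastAtMost' continuous_at_imp_continuous_on ballI isCont_Phi_exp_minus)
  have "Hfun b \<beta> \<nu> x - (1 / \<bar>b\<bar>) * (LBINT u=1..exp x. nubar \<nu> u / u)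
      = (1 / \<bar>b\<bar>) * (LINT s:{0..x}|lborel. Phi \<beta> \<nu> (exp (- s)) - nubar \<nu> (exp s))"
    unfolding Hfun_def LBINT_Phi_div_eq_LINT[OF assms] LBINT_nubar_div_eq_LINT(1)[OF assms]
      set_integral_diff(2)[OF int_G LBINT_nubar_div_eq_LINT(2)[OF assms]] by (simp add: algebra_simps)
  then show ?thesis
    using abs_LINT_Phi_exp_sub_nubar_le[OF assms] by (simp add: abs_mult divide_right_mono)
qed

lemma Hfun_asymp_equiv_LBINT_nubar:
  assumes "filterlim (Hfun b \<beta> \<nu>) at_top at_top"
  shows "Hfun b \<beta> \<nu> \<sim>[at_top] (\<lambda>x. (1 / \<bar>b\<bar>) * (LBINT u=1..exp x. nubar \<nu> u / u))"
  by (rule asymp_equiv_if_bounded_diff[OF assms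
        eventually_mono[OF eventually_ge_at_top abs_Hfun_sub_LBINT_nubar_le]])

section \<open>Slowly varying tails\<close>

definition truncated_mean :: "real \<Rightarrow> real" where
  "truncated_mean y = (\<integral>z. min z y \<partial>\<nu>)"

lemma integrable_min_const: "y \<ge> 0 \<Longrightarrow> integrable \<nu> (\<lambda>z. min z y)"
proof (rule integrable_if_le_min_1[where C = "max 1 y"])
  fix z :: real assume "y \<ge> 0" "z > 0"
  show "\<bar>min z y\<bar> \<le> max 1 y * min 1 z"
  proof (cases "z \<le> 1")
    case True
    have "1 * z \<le> max 1 y * z" by (rule mult_right_mono) (use \<open>z > 0\<close> in auto)
    moreover have "\<bar>min z y\<bar> \<le> z" "min 1 z = z" using True \<open>y \<ge> 0\<close> \<open>z > 0\<close> by auto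
    ultimately show ?thesis by simp
  next
    case False
    then show ?thesis using \<open>y \<ge> 0\<close> by simp
  qed
qed simp

lemma truncated_mean_mono: "0 \<le> y \<Longrightarrow> y \<le> y' \<Longrightarrow> truncated_mean y \<le> truncated_mean y'"
  unfolding truncated_mean_def by (intro integral_mono integrable_min_const) auto

lemma truncated_mean_le_half:
  assumes "y > 0"
  shows "truncated_mean y \<le> truncated_mean (y / 2) + y / 2 * nubar \<nu> (y / 2)"
proof -
  have i1: "integrable \<nu> (\<lambda>z. min z (y / 2))" using assms by (simp add: integrable_min_const)
  have i2: "integrable \<nu> (\<lambda>z. y / 2 * indicator {y / 2..} z)"
    using assms by (intro integrable_mult_right integrable_indicator_atLeast) simp
  have "truncated_mean y \<le> (\<integral>z. min z (y / 2) + y / 2 * indicator {y / 2..} z \<partial>\<nu>)"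
    unfolding truncated_mean_def
    by (rule integral_mono[OF _ Bochner_Integration.integrable_add[OF i1 i2]])
      (use assms in \<open>simp_all add: integrable_min_const indicator_def\<close>)
  also have "\<dots> = (\<integral>z. min z (y / 2) \<partial>\<nu>) + (\<integral>z. y / 2 * indicator {y / 2..} z \<partial>\<nu>)"
    by (rule Bochner_Integration.integral_add[OF i1 i2])
  also have "\<dots> = truncated_mean (y / 2) + y / 2 * nubar \<nu> (y / 2)"
    using assms by (simp add: truncated_mean_def nubar_eq_integral)
  finally show ?thesis .
qed

lemma nubar_mult_le_jump_exponent:
  assumes "y > 0" "s > 0"
  shows "(1 - exp (- s)) * nubar \<nu> (s * y) \<le> jump_exponent (1 / y)"
proof -
  have pointwise: "(1 - exp (- s)) * indicator {s * y..} z \<le> 1 - exp (- (1 / y) * z)" if "z > 0" for z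
  proof (cases "s * y \<le> z")
    case True
    then have "s \<le> z / y" using assms by (simp add: pos_le_divide_eq)
    then show ?thesis using True by simp
  next
    case False
    then show ?thesis using assms that by simp
  qed
  have "(\<integral>z. (1 - exp (- s)) * indicator {s * y..} z \<partial>\<nu>) \<le> jump_exponent (1 / y)"
    unfolding jump_exponent_def
  proof (intro integral_mono_AE)
    show "integrable \<nu> (\<lambda>z. (1 - exp (- s)) * indicator {s * y..} z)"
      using assms by (intro integrable_mult_right integrable_indicator_atLeast) simp
    show "integrable \<nu> (\<lambda>z. 1 - exp (- (1 / y) * z))"
      using assms by (intro integrable_one_minus_exp) simp
    show "AE z in \<nu>. (1 - exp (- s)) * indicator {s * y..} z \<le> 1 - exp (- (1 / y) * z)"
      using AE_pos by eventually_elim (rule pointwise)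
  qed
  then show ?thesis
    using assms by (simp add: nubar_eq_integral)
qed

lemma jump_exponent_le_nubar_truncated_mean:
  assumes "y > 0" "\<epsilon> > 0"
  shows "jump_exponent (1 / y) \<le> nubar \<nu> (\<epsilon> * y) + truncated_mean (\<epsilon> * y) / y"
proof -
  have pointwise: "1 - exp (- (1 / y) * z) \<le> indicator {\<epsilon> * y..} z + 1 / y * min z (\<epsilon> * y)"
    if "z > 0" for z
  proof (cases "\<epsilon> * y \<le> z")
    case True
    then show ?thesis using assms that by (simp, insert exp_gt_zero[of "- (z / y)"], linarith)
  next
    case False
    then show ?thesis using exp_ge_add_one_self[of "- (1 / y) * z"] by simp
  qed
  have i1: "integrable \<nu> (indicator {\<epsilon> * y..} :: real \<Rightarrow> real)"
    using assms by (simp add: integrable_indicator_atLeast)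
  have i2: "integrable \<nu> (\<lambda>z. 1 / y * min z (\<epsilon> * y))"
    using assms by (intro integrable_mult_right integrable_min_const) simp
  have "jump_exponent (1 / y) \<le> (\<integral>z. indicator {\<epsilon> * y..} z + 1 / y * min z (\<epsilon> * y) \<partial>\<nu>)"
    unfolding jump_exponent_def
  proof (rule integral_mono_AE[OF _ Bochner_Integration.integrable_add[OF i1 i2]])
    show "integrable \<nu> (\<lambda>z. 1 - exp (- (1 / y) * z))"
      using assms by (intro integrable_one_minus_exp) simp
    show "AE z in \<nu>. 1 - exp (- (1 / y) * z) \<le> indicator {\<epsilon> * y..} z + 1 / y * min z (\<epsilon> * y)"
      using AE_pos by eventually_elim (rule pointwise)
  qed
  also have "\<dots> = (\<integral>z. indicator {\<epsilon> * y..} z \<partial>\<nu>) + (\<integral>z. 1 / y * min z (\<epsilon> * y) \<partial>\<nu>)"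
    by (rule Bochner_Integration.integral_add[OF i1 i2])
  also have "\<dots> = nubar \<nu> (\<epsilon> * y) + truncated_mean (\<epsilon> * y) / y"
    using assms by (simp add: truncated_mean_def nubar_eq_integral)
  finally show ?thesis .
qed

context
  fixes X :: real
  assumes X_pos: "X > 0" and nubar_half_le: "\<And>y. X \<le> y \<Longrightarrow> nubar \<nu> (y / 2) \<le> 3 / 2 * nubar \<nu> y"
begin

lemma truncated_mean_le_doubling:
  assumes "X \<le> y"
  shows "truncated_mean y \<le> truncated_mean (2 * X) + 3 * y * nubar \<nu> y"
  using X_pos assms
proof (induction y rule: doubling_induct)
  case (base y)
  then have "truncated_mean y \<le> truncated_mean (2 * X)" by (intro truncated_mean_mono) auto
  moreover have "0 \<le> 3 * y * nubar \<nu> y" using base X_pos nubar_nonneg[of y] by simp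
  ultimately show ?case by linarith
next
  case (step y)
  have "truncated_mean y \<le> truncated_mean (y / 2) + y / 2 * nubar \<nu> (y / 2)"
    using step X_pos by (intro truncated_mean_le_half) simp
  moreover have "y * nubar \<nu> (y / 2) \<le> y * (3 / 2 * nubar \<nu> y)"
    using step X_pos nubar_half_le[of y] by (intro mult_left_mono) simp_all
  ultimately show ?case using step.IH by (simp add: algebra_simps)
qed

lemma filterlim_mult_nubar_at_top:
  assumes "nubar \<nu> (2 * X) > 0"
  shows "filterlim (\<lambda>y. y * nubar \<nu> y) at_top at_top"
proof (rule filterlim_at_top_doubling[OF X_pos, of "4 / 3" "X * nubar \<nu> (2 * X)"])
  have growth: "4 / 3 * (y / 2 * nubar \<nu> (y / 2)) \<le> y * nubar \<nu> y" if "X \<le> y" for y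
    using mult_left_mono[OF nubar_half_le[OF that], of y] that X_pos by simp
  show "4 / 3 * (y / 2 * nubar \<nu> (y / 2)) \<le> y * nubar \<nu> y" if "2 * X \<le> y" for y
    using that X_pos by (intro growth) simp
  show "X * nubar \<nu> (2 * X) \<le> y * nubar \<nu> y" if "X \<le> y" for y
    using X_pos that
  proof (induction y rule: doubling_induct)
    case (base y)
    then show ?case
      using X_pos nubar_antimono[of y "2 * X"] nubar_nonneg by (intro mult_mono) simp_all
  next
    case (step y)
    have "0 \<le> y / 2 * nubar \<nu> (y / 2)" using step X_pos nubar_nonneg[of "y / 2"] by simp
    moreover have "X \<le> y" using step X_pos by simp
    ultimately show ?case using step.IH growth[of y] by linarith
  qed
qed (use X_pos assms in simp_all)

lemma Phi_inverse_le_nubar: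
  assumes "y > 0" "\<epsilon> > 0" "X \<le> \<epsilon> * y"
  shows "Phi \<beta> \<nu> (1 / y) \<le> (\<beta> + truncated_mean (2 * X)) / y + (1 + 3 * \<epsilon>) * nubar \<nu> (\<epsilon> * y)"
proof -
  have "Phi \<beta> \<nu> (1 / y) \<le> \<beta> / y + nubar \<nu> (\<epsilon> * y) + truncated_mean (\<epsilon> * y) / y"
    using jump_exponent_le_nubar_truncated_mean[OF assms(1,2)] by (simp add: Phi_eq)
  also have "truncated_mean (\<epsilon> * y) / y \<le> (truncated_mean (2 * X) + 3 * (\<epsilon> * y) * nubar \<nu> (\<epsilon> * y)) / y"
    using truncated_mean_le_doubling[OF assms(3)] assms(1) by (simp add: divide_right_mono)
  also have "\<beta> / y + nubar \<nu> (\<epsilon> * y) + \<dots> = (\<beta> + truncated_mean (2 * X)) / y + (1 + 3 * \<epsilon>) * nubar \<nu> (\<epsilon> * y)"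
    using assms(1) by (simp add: field_simps)
  finally show ?thesis by simp
qed

end

lemma nubar_pos_if_slowly_varying:
  assumes sv: "slowly_varying (nubar \<nu>)" and "y > 0"
  shows "nubar \<nu> y > 0"
proof (rule ccontr)
  assume "\<not> nubar \<nu> y > 0"
  then have zero: "nubar \<nu> x = 0" if "x \<ge> y" for x
    using nubar_antimono[OF \<open>y > 0\<close> that] nubar_nonneg[of x] by simp
  have "((\<lambda>x. nubar \<nu> (2 * x) / nubar \<nu> x) \<longlongrightarrow> 1) at_top"
    using sv by (rule slowly_varyingD) simp
  moreover have "eventually (\<lambda>x. nubar \<nu> (2 * x) / nubar \<nu> x = 0) at_top"
    using eventually_ge_at_top[of y] by (rule eventually_mono) (simp add: zero)
  ultimately have "((\<lambda>x :: real. 0 :: real) \<longlongrightarrow> 1) at_top"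
    by (rule Lim_transform_eventually)
  then show False by (simp add: tendsto_const_iff)
qed

lemma nubar_half_le_if_slowly_varying:
  assumes sv: "slowly_varying (nubar \<nu>)"
  obtains X where "X > 0" "\<And>y. X \<le> y \<Longrightarrow> nubar \<nu> (y / 2) \<le> 3 / 2 * nubar \<nu> y"
proof -
  have "((\<lambda>y. nubar \<nu> (1 / 2 * y) / nubar \<nu> y) \<longlongrightarrow> 1) at_top"
    using sv by (rule slowly_varyingD) simp
  from order_tendstoD(2)[OF this, of "3 / 2"]
  obtain X0 where X0: "\<And>y. X0 \<le> y \<Longrightarrow> nubar \<nu> (1 / 2 * y) / nubar \<nu> y < 3 / 2"
    by (auto simp: eventually_at_top_linorder)
  show ?thesis
  proof (rule that[of "max X0 1"])
    fix y assume "max X0 1 \<le> y"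
    then show "nubar \<nu> (y / 2) \<le> 3 / 2 * nubar \<nu> y"
      using X0[of y] nubar_pos_if_slowly_varying[OF sv, of y] by (simp add: divide_less_eq)
  qed simp
qed

lemma eventually_gt_Phi_inverse_div_nubar:
  assumes sv: "slowly_varying (nubar \<nu>)" and "a < 1"
  shows "eventually (\<lambda>y. a < Phi \<beta> \<nu> (1 / y) / nubar \<nu> y) at_top"
proof -
  define s where "s = 1 / (1 - a)"
  have "s > 0" using \<open>a < 1\<close> by (simp add: s_def)
  have "s < exp s" using exp_ge_add_one_self[of s] by linarith
  then have "exp (- s) < 1 / s" using \<open>s > 0\<close> by (simp add: exp_minus field_simps)
  then have "a < (1 - exp (- s)) * 1" using \<open>a < 1\<close> by (simp add: s_def)
  moreover have "((\<lambda>y. (1 - exp (- s)) * (nubar \<nu> (s * y) / nubar \<nu> y)) \<longlongrightarrow> (1 - exp (- s)) * 1) at_top"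
    using slowly_varyingD[OF sv \<open>s > 0\<close>] by (intro tendsto_mult tendsto_const)
  ultimately have "eventually (\<lambda>y. a < (1 - exp (- s)) * (nubar \<nu> (s * y) / nubar \<nu> y)) at_top"
    by (simp add: order_tendstoD(1))
  then show ?thesis
    using eventually_gt_at_top[of 0]
  proof eventually_elim
    case (elim y)
    have "(1 - exp (- s)) * nubar \<nu> (s * y) \<le> Phi \<beta> \<nu> (1 / y)"
      using nubar_mult_le_jump_exponent[OF \<open>y > 0\<close> \<open>s > 0\<close>] drift_nonneg \<open>y > 0\<close>
      unfolding Phi_eq by (simp add: add_increasing)
    then have "(1 - exp (- s)) * (nubar \<nu> (s * y) / nubar \<nu> y) \<le> Phi \<beta> \<nu> (1 / y) / nubar \<nu> y"
      using nubar_pos_if_slowly_varying[OF sv \<open>y > 0\<close>] by (simp add: divide_right_mono)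
    then show ?case using elim by linarith
  qed
qed

lemma eventually_less_Phi_inverse_div_nubar:
  assumes sv: "slowly_varying (nubar \<nu>)" and "1 < a"
  shows "eventually (\<lambda>y. Phi \<beta> \<nu> (1 / y) / nubar \<nu> y < a) at_top"
proof -
  obtain X where X_pos: "X > 0" and half: "\<And>y. X \<le> y \<Longrightarrow> nubar \<nu> (y / 2) \<le> 3 / 2 * nubar \<nu> y"
    using nubar_half_le_if_slowly_varying[OF sv] by blast
  define \<epsilon> where "\<epsilon> = (a - 1) / 6"
  have "\<epsilon> > 0" using \<open>1 < a\<close> by (simp add: \<epsilon>_def)
  define C where "C = \<beta> + truncated_mean (2 * X)"
  define U where "U y = C * inverse (y * nubar \<nu> y) + (1 + 3 * \<epsilon>) * (nubar \<nu> (\<epsilon> * y) / nubar \<nu> y)" for y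
  have "(U \<longlongrightarrow> C * 0 + (1 + 3 * \<epsilon>) * 1) at_top"
    unfolding U_def
    using filterlim_mult_nubar_at_top[OF X_pos half nubar_pos_if_slowly_varying[OF sv]]
      slowly_varyingD[OF sv \<open>\<epsilon> > 0\<close>] X_pos
    by (intro tendsto_intros tendsto_inverse_0_at_top) auto
  moreover have "C * 0 + (1 + 3 * \<epsilon>) * 1 < a" using \<open>1 < a\<close> by (simp add: \<epsilon>_def field_simps)
  ultimately have "eventually (\<lambda>y. U y < a) at_top" by (rule order_tendstoD(2))
  then show ?thesis
    using eventually_ge_at_top[of "max 1 (X / \<epsilon>)"]
  proof eventually_elim
    case (elim y)
    then have "y > 0" "X \<le> \<epsilon> * y" using \<open>\<epsilon> > 0\<close> by (auto simp: field_simps)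
    have "Phi \<beta> \<nu> (1 / y) / nubar \<nu> y \<le> (C / y + (1 + 3 * \<epsilon>) * nubar \<nu> (\<epsilon> * y)) / nubar \<nu> y"
      using Phi_inverse_le_nubar[OF X_pos half \<open>y > 0\<close> \<open>\<epsilon> > 0\<close> \<open>X \<le> \<epsilon> * y\<close>]
        nubar_pos_if_slowly_varying[OF sv \<open>y > 0\<close>]
      by (simp add: C_def divide_right_mono)
    also have "\<dots> = U y"
      using \<open>y > 0\<close> nubar_pos_if_slowly_varying[OF sv \<open>y > 0\<close>] by (simp add: U_def field_simps)
    finally show ?case using elim by linarith
  qed
qed

lemma tendsto_Phi_inverse_div_nubar:
  assumes "slowly_varying (nubar \<nu>)"
  shows "((\<lambda>y. Phi \<beta> \<nu> (1 / y) / nubar \<nu> y) \<longlongrightarrow> 1) at_top"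
  using eventually_gt_Phi_inverse_div_nubar[OF assms] eventually_less_Phi_inverse_div_nubar[OF assms]
  by (rule order_tendstoI)

lemma deriv_Hfun_asymp_equiv:
  assumes "slowly_varying (nubar \<nu>)" "b \<noteq> 0"
  shows "deriv (Hfun b \<beta> \<nu>) \<sim>[at_top] (\<lambda>x. nubar \<nu> (exp x) / \<bar>b\<bar>)"
proof (rule asymp_equivI')
  have eq: "deriv (Hfun b \<beta> \<nu>) x / (nubar \<nu> (exp x) / \<bar>b\<bar>) = Phi \<beta> \<nu> (1 / exp x) / nubar \<nu> (exp x)"
    for x
    using DERIV_imp_deriv[OF has_real_derivative_Hfun] \<open>b \<noteq> 0\<close> by (simp add: exp_minus inverse_eq_divide)
  show "((\<lambda>x. deriv (Hfun b \<beta> \<nu>) x / (nubar \<nu> (exp x) / \<bar>b\<bar>)) \<longlongrightarrow> 1) at_top"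
    unfolding eq using filterlim_compose[OF tendsto_Phi_inverse_div_nubar[OF assms(1)] exp_at_top] by (simp add: o_def)
qed

end

theorem proposition1:
  fixes b \<beta> :: real and \<nu> :: "real measure"
  assumes beta_nonneg: "\<beta> \<ge> 0"
    and nu_sets: "sets \<nu> = sets borel"
    and nu_support: "emeasure \<nu> {..0} = 0"
    and nu_sigma: "sigma_finite_measure \<nu>"
    and nu_int: "(\<integral>\<^sup>+ z. ennreal (min 1 z) \<partial>\<nu>) < \<infinity>"
    and Phi_pos: "\<And>q. q > 0 \<Longrightarrow> Phi \<beta> \<nu> q > 0"
    and b_ne: "b \<noteq> 0"
    and H_infty: "filterlim (Hfun b \<beta> \<nu>) at_top at_top"
  shows "(Hfun b \<beta> \<nu> \<sim>[at_top] (\<lambda>x. (1 / \<bar>b\<bar>) * (LBINT u=1..exp x. nubar \<nu> u / u)))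
    \<and> (\<forall>x\<ge>0. (Hfun b \<beta> \<nu> has_real_derivative Phi \<beta> \<nu> (exp (- x)) / \<bar>b\<bar>) (at x))
    \<and> (slowly_varying (nubar \<nu>) \<longrightarrow>
           deriv (Hfun b \<beta> \<nu>) \<sim>[at_top] (\<lambda>x. nubar \<nu> (exp x) / \<bar>b\<bar>))"
proof -
  interpret subordinator_exponent \<beta> \<nu>
    using beta_nonneg nu_sets nu_support nu_int by unfold_locales
  show ?thesis
    using Hfun_asymp_equiv_LBINT_nubar[OF H_infty] has_real_derivative_Hfun deriv_Hfun_asymp_equiv[OF _ b_ne]
    by blast
qed

end
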